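(* Let $n\ge 2$, let $a_1,\dots,a_n$ be positive integers, let $b\ge 0$ be an integer, and let $M$ be the least common multiple of $a_1,\dots,a_n$. Let $b'=\lfloor b/M\rfloor$ and let $r$ be the remainder of $b$ modulo $M$ (so $0\le r<M$ and $b=b'M+r$). For an integer $c$, let $P'(c)$ denote the number of $n$-tuples $(t_1,\dots,t_n)$ of integers satisfying $$\sum_{j=1}^n a_jt_j=c,\qquad 0\le t_j\le \frac{M}{a_j}-1\quad (j=1,\dots,n),$$ and set $l_i=P'(r+(i-1)M)$ for $i=1,\dots,n$. Let $P(b)$ be the number of $n$-tuples $(x_1,\dots,x_n)$ of non-negative integers with $\sum_{i=1}^n a_ix_i=b$. Then $$P(b)=\sum_{i=1}^n l_i\, C(b'+2-i;\,n-1).$$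
   Context: For a real number $k$ and a non-negative integer $l$, define $C(k;l)=\frac{1}{l!}\,k(k+1)\cdots(k+l-1)$ if $k$ is a positive integer (natural number), and $C(k;l)=0$ otherwise (in particular $C(k;l)=0$ whenever $k$ is not an integer or $k\le 0$). *)

theory Defs
  imports Complex_Main "HOL-Library.FuncSet"
begin

definition Ccoef :: "real \<Rightarrow> nat \<Rightarrow> real" where
  "Ccoef k l = (if k \<in> \<int> \<and> k > 0 then pochhammer k l / fact l else 0)"

definition Pprime :: "nat \<Rightarrow> (nat \<Rightarrow> nat) \<Rightarrow> int \<Rightarrow> nat" where
  "Pprime n a c = card {t \<in> {..<n} \<rightarrow>\<^sub>E (UNIV :: int set).
      (\<Sum>j<n. int (a j) * t j) = c \<and>
      (\<forall>j<n. 0 \<le> t j \<and> t j \<le> int (Lcm (a ` {..<n}) div a j) - 1)}"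

definition Pcount :: "nat \<Rightarrow> (nat \<Rightarrow> nat) \<Rightarrow> nat \<Rightarrow> nat" where
  "Pcount n a b = card {x \<in> {..<n} \<rightarrow>\<^sub>E (UNIV :: nat set). (\<Sum>i<n. a i * x i) = b}"

end

theory Submission
  imports Defs
begin

text \<open>Write each \<open>x\<^sub>j = t\<^sub>j + d\<^sub>j s\<^sub>j\<close> with \<open>d\<^sub>j = M / a\<^sub>j\<close> and \<open>0 \<le> t\<^sub>j < d\<^sub>j\<close>. Then
  \<open>b = c + M (s\<^sub>1 + \<dots> + s\<^sub>n)\<close> with \<open>c = \<Sum> a\<^sub>j t\<^sub>j < n M\<close> and \<open>c \<equiv> b (mod M)\<close>, so
  \<open>c = r + (i - 1) M\<close> for a unique \<open>i \<in> {1..n}\<close>, and then \<open>s\<close> is an arbitrary composition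
  of \<open>b' + 1 - i\<close> into \<open>n\<close> non-negative parts; there are \<open>C(b' + 2 - i; n - 1)\<close> of those.\<close>

definition compositions :: "nat \<Rightarrow> nat \<Rightarrow> (nat \<Rightarrow> nat) set" where
  "compositions n N = {s \<in> {..<n} \<rightarrow>\<^sub>E UNIV. (\<Sum>j<n. s j) = N}"

definition bounded_solutions :: "nat \<Rightarrow> (nat \<Rightarrow> nat) \<Rightarrow> (nat \<Rightarrow> nat) \<Rightarrow> nat \<Rightarrow> (nat \<Rightarrow> nat) set" where
  "bounded_solutions n a d c = {t \<in> {..<n} \<rightarrow>\<^sub>E UNIV. (\<Sum>j<n. a j * t j) = c \<and> (\<forall>j<n. t j < d j)}"

lemma card_compositions: "card (compositions n N) = (N + n - 1) choose N"
proof -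
  have "bij_betw (\<lambda>l. \<lambda>j\<in>{..<n}. l ! j) {l. length l = n \<and> sum_list l = N} (compositions n N)"
  proof (rule bij_betw_byWitness[where f' = "\<lambda>s. map s [0..<n]"])
    show "\<forall>l\<in>{l. length l = n \<and> sum_list l = N}. map (\<lambda>j\<in>{..<n}. l ! j) [0..<n] = l"
      by (auto intro!: nth_equalityI)
    show "\<forall>s\<in>compositions n N. (\<lambda>j\<in>{..<n}. map s [0..<n] ! j) = s"
      by (auto simp: compositions_def PiE_def extensional_def fun_eq_iff)
    show "(\<lambda>l. \<lambda>j\<in>{..<n}. l ! j) ` {l. length l = n \<and> sum_list l = N} \<subseteq> compositions n N"
      by (intro image_subsetI) (clarsimp simp: compositions_def sum_list_sum_nth atLeast0LessThan)
    show "(\<lambda>s. map s [0..<n]) ` compositions n N \<subseteq> {l. length l = n \<and> sum_list l = N}"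
      by (intro image_subsetI) (simp add: compositions_def interv_sum_list_conv_sum_set_nat atLeast0LessThan)
  qed
  from bij_betw_same_card[OF this] show ?thesis
    using card_length_sum_list[of n N] by simp
qed

lemma finite_compositions: "finite (compositions n N)"
proof (rule finite_subset)
  show "compositions n N \<subseteq> {..<n} \<rightarrow>\<^sub>E {..N}"
  proof (auto simp: compositions_def PiE_def Pi_def)
    fix s :: "nat \<Rightarrow> nat" and j assume "j < n"
    then show "s j \<le> (\<Sum>j<n. s j)"
      by (intro member_le_sum) auto
  qed
qed (simp add: finite_PiE)

lemma finite_bounded_solutions: "finite (bounded_solutions n a d c)"
proof (rule finite_subset)
  show "bounded_solutions n a d c \<subseteq> PiE {..<n} (\<lambda>j. {..<d j})"
    by (auto simp: bounded_solutions_def)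
qed (simp add: finite_PiE)

lemma Ccoef_of_nat_plus_one: "Ccoef (real m + 1) k = real ((m + k) choose k)"
proof -
  have "real m + 1 \<in> \<int>"
    by (metis Ints_1 Ints_add Ints_of_nat)
  then have "Ccoef (real m + 1) k = pochhammer (real m + 1) k / fact k"
    by (simp add: Ccoef_def add_pos_nonneg)
  also have "\<dots> = real (m + k) gchoose k"
    by (simp add: gbinomial_pochhammer')
  finally show ?thesis
    by (simp add: binomial_gbinomial)
qed

lemma Ccoef_nonpos: "k \<le> 0 \<Longrightarrow> Ccoef k l = 0"
  by (simp add: Ccoef_def)

lemma card_compositions_eq_Ccoef:
  assumes "0 < n"
  shows "real (card (compositions n N)) = Ccoef (real N + 1) (n - 1)"
proof -
  have "(N + n - 1) choose N = (N + (n - 1)) choose (n - 1)"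
    using assms binomial_symmetric[of N "N + (n - 1)"] by (simp add: Nat.add_diff_assoc)
  then show ?thesis
    by (simp add: card_compositions Ccoef_of_nat_plus_one)
qed

lemma weighted_sum_mod_div:
  fixes a d x :: "nat \<Rightarrow> nat"
  assumes "\<forall>j<n. a j * d j = M"
  shows "(\<Sum>j<n. a j * x j) = (\<Sum>j<n. a j * (x j mod d j)) + M * (\<Sum>j<n. x j div d j)"
proof -
  have "a j * x j = a j * (x j mod d j) + M * (x j div d j)" if "j < n" for j
  proof -
    have "a j * x j = a j * (x j mod d j + d j * (x j div d j))"
      by (simp only: mod_mult_div_eq)
    also have "\<dots> = a j * (x j mod d j) + (a j * d j) * (x j div d j)"
      by (simp only: distrib_left mult.assoc)
    finally show ?thesis
      using assms that by simp
  qed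
  then show ?thesis
    by (simp add: sum_distrib_left sum.distrib[symmetric])
qed

lemma weighted_sum_bounded_less:
  fixes a d t :: "nat \<Rightarrow> nat"
  assumes "0 < n" "\<forall>j<n. 0 < a j" "\<forall>j<n. a j * d j = M" "\<forall>j<n. t j < d j"
  shows "(\<Sum>j<n. a j * t j) < n * M"
proof -
  have "(\<Sum>j<n. a j * t j) < (\<Sum>j<n. a j * d j)"
    by (rule sum_strict_mono) (use assms in auto)
  then show ?thesis
    using assms(3) by simp
qed

lemma bij_betw_solutions_mod_div:
  fixes a d :: "nat \<Rightarrow> nat"
  assumes "\<forall>j<n. 0 < d j" "\<forall>j<n. a j * d j = M"
  shows "bij_betw (\<lambda>x. (\<lambda>j\<in>{..<n}. x j mod d j, \<lambda>j\<in>{..<n}. x j div d j))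
           {x \<in> {..<n} \<rightarrow>\<^sub>E UNIV. (\<Sum>j<n. a j * x j) = b}
           {(t, s). t \<in> {..<n} \<rightarrow>\<^sub>E UNIV \<and> (\<forall>j<n. t j < d j) \<and> s \<in> {..<n} \<rightarrow>\<^sub>E UNIV \<and>
              (\<Sum>j<n. a j * t j) + M * (\<Sum>j<n. s j) = b}"
    (is "bij_betw ?f ?X ?Y")
proof -
  let ?g = "\<lambda>(t, s). \<lambda>j\<in>{..<n}. t j + d j * s j"
  have recombine: "(\<Sum>j<n. a j * (t j + d j * s j)) = (\<Sum>j<n. a j * t j) + M * (\<Sum>j<n. s j)"
    for t s :: "nat \<Rightarrow> nat"
  proof -
    have "a j * (t j + d j * s j) = a j * t j + (a j * d j) * s j" for j
      by (simp add: algebra_simps)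
    then have "(\<Sum>j<n. a j * (t j + d j * s j)) = (\<Sum>j<n. a j * t j + M * s j)"
      using assms(2) by (intro sum.cong) auto
    then show ?thesis
      by (simp add: sum.distrib sum_distrib_left)
  qed
  show ?thesis
  proof (rule bij_betw_byWitness[where f' = ?g])
    show "\<forall>x\<in>?X. ?g (?f x) = x"
      by (auto simp: PiE_def extensional_def fun_eq_iff)
    show "\<forall>y\<in>?Y. ?f (?g y) = y"
      using assms(1) by (auto simp: PiE_def extensional_def fun_eq_iff)
    show "?f ` ?X \<subseteq> ?Y"
    proof (rule image_subsetI)
      fix x assume "x \<in> ?X"
      then have "(\<Sum>j<n. a j * (x j mod d j)) + M * (\<Sum>j<n. x j div d j) = b"
        using weighted_sum_mod_div[OF assms(2), of x] by simp
      then show "?f x \<in> ?Y"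
        using assms(1) by simp
    qed
    show "?g ` ?Y \<subseteq> ?X"
      using recombine by auto
  qed
qed

lemma solution_pairs_eq_UN:
  fixes a d :: "nat \<Rightarrow> nat"
  assumes "0 < n" "0 < M" "\<forall>j<n. 0 < a j" "\<forall>j<n. a j * d j = M"
  shows "{(t, s). t \<in> {..<n} \<rightarrow>\<^sub>E UNIV \<and> (\<forall>j<n. t j < d j) \<and> s \<in> {..<n} \<rightarrow>\<^sub>E UNIV \<and>
             (\<Sum>j<n. a j * t j) + M * (\<Sum>j<n. s j) = b}
       = (\<Union>i\<in>{1..min n (b div M + 1)}.
             bounded_solutions n a d (b mod M + (i - 1) * M) \<times> compositions n (b div M + 1 - i))"
    (is "?pairs = ?union")
proof
  show "?pairs \<subseteq> ?union"
  proof
    fix p assume "p \<in> ?pairs"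
    then obtain t s where p: "p = (t, s)" and t: "t \<in> {..<n} \<rightarrow>\<^sub>E UNIV" "\<forall>j<n. t j < d j"
      and s: "s \<in> {..<n} \<rightarrow>\<^sub>E UNIV" and sum_eq: "(\<Sum>j<n. a j * t j) + M * (\<Sum>j<n. s j) = b"
      by blast
    define c where "c = (\<Sum>j<n. a j * t j)"
    define i where "i = c div M + 1"
    have "c < n * M"
      unfolding c_def using assms t(2) by (intro weighted_sum_bounded_less) auto
    then have "i \<le> n"
      using assms(2) by (simp add: i_def less_mult_imp_div_less Suc_le_eq)
    have "b mod M = c mod M" "b div M = c div M + (\<Sum>j<n. s j)"
      using assms(2) sum_eq by (auto simp: c_def)
    then have "c = b mod M + (i - 1) * M" "(\<Sum>j<n. s j) = b div M + 1 - i" "1 \<le> i" "i \<le> b div M + 1"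
      by (simp_all add: i_def)
    then show "p \<in> ?union"
      using \<open>i \<le> n\<close> p t s
      by (auto simp: bounded_solutions_def compositions_def c_def intro!: bexI[of _ i])
  qed
  show "?union \<subseteq> ?pairs"
  proof
    fix p assume "p \<in> ?union"
    then obtain i t s where p: "p = (t, s)" and i: "i \<in> {1..min n (b div M + 1)}"
      and t: "t \<in> bounded_solutions n a d (b mod M + (i - 1) * M)" and s: "s \<in> compositions n (b div M + 1 - i)"
      by blast
    obtain k where k: "i = Suc k" "k \<le> b div M"
      using i by (cases i) auto
    moreover obtain m where "b div M = k + m"
      using k(2) le_iff_add by blast
    ultimately have "b mod M + (i - 1) * M + M * (b div M + 1 - i) = b mod M + M * (b div M)"
      by (simp add: algebra_simps)
    then show "p \<in> ?pairs"
      using p t s by (simp add: bounded_solutions_def compositions_def)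
  qed
qed

lemma card_weighted_solutions:
  fixes a d :: "nat \<Rightarrow> nat"
  assumes "0 < n" "0 < M" "\<forall>j<n. 0 < a j" "\<forall>j<n. a j * d j = M"
  shows "card {x \<in> {..<n} \<rightarrow>\<^sub>E UNIV. (\<Sum>j<n. a j * x j) = b}
       = (\<Sum>i=1..min n (b div M + 1).
             card (bounded_solutions n a d (b mod M + (i - 1) * M)) * card (compositions n (b div M + 1 - i)))"
proof -
  have "\<forall>j<n. 0 < d j"
    using assms(2,4) by (metis mult_0_right neq0_conv)
  from bij_betw_same_card[OF bij_betw_solutions_mod_div[OF this assms(4)]]
  have "card {x \<in> {..<n} \<rightarrow>\<^sub>E UNIV. (\<Sum>j<n. a j * x j) = b}
      = card (\<Union>i\<in>{1..min n (b div M + 1)}.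
               bounded_solutions n a d (b mod M + (i - 1) * M) \<times> compositions n (b div M + 1 - i))"
    unfolding solution_pairs_eq_UN[OF assms] .
  also have "\<dots> = (\<Sum>i=1..min n (b div M + 1).
      card (bounded_solutions n a d (b mod M + (i - 1) * M) \<times> compositions n (b div M + 1 - i)))"
  proof (rule card_UN_disjoint)
    show "\<forall>i\<in>{1..min n (b div M + 1)}. \<forall>i'\<in>{1..min n (b div M + 1)}. i \<noteq> i' \<longrightarrow>
        bounded_solutions n a d (b mod M + (i - 1) * M) \<times> compositions n (b div M + 1 - i) \<inter>
        bounded_solutions n a d (b mod M + (i' - 1) * M) \<times> compositions n (b div M + 1 - i') = {}"
      using assms(2) by (auto simp: bounded_solutions_def)
  qed (simp_all add: finite_bounded_solutions finite_compositions)
  finally show ?thesis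
    by (simp add: card_cartesian_product)
qed

lemma Pprime_eq_card_bounded_solutions:
  "Pprime n a (int c) = card (bounded_solutions n a (\<lambda>j. Lcm (a ` {..<n}) div a j) c)"
proof -
  define d where "d = (\<lambda>j. Lcm (a ` {..<n}) div a j)"
  let ?T = "{t \<in> {..<n} \<rightarrow>\<^sub>E UNIV. (\<Sum>j<n. int (a j) * t j) = int c \<and>
             (\<forall>j<n. 0 \<le> t j \<and> t j \<le> int (d j) - 1)}"
  have "bij_betw (\<lambda>t. \<lambda>j\<in>{..<n}. int (t j)) (bounded_solutions n a d c) ?T"
  proof (rule bij_betw_byWitness[where f' = "\<lambda>t. \<lambda>j\<in>{..<n}. nat (t j)"])
    show "\<forall>t\<in>bounded_solutions n a d c. (\<lambda>j\<in>{..<n}. nat ((\<lambda>j\<in>{..<n}. int (t j)) j)) = t"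
      by (auto simp: bounded_solutions_def PiE_def extensional_def fun_eq_iff)
    show "\<forall>t\<in>?T. (\<lambda>j\<in>{..<n}. int ((\<lambda>j\<in>{..<n}. nat (t j)) j)) = t"
      by (auto simp: PiE_def extensional_def fun_eq_iff)
    show "(\<lambda>t. \<lambda>j\<in>{..<n}. int (t j)) ` bounded_solutions n a d c \<subseteq> ?T"
      by (auto simp: bounded_solutions_def of_nat_sum[symmetric] less_imp_of_nat_less)
    show "(\<lambda>t. \<lambda>j\<in>{..<n}. nat (t j)) ` ?T \<subseteq> bounded_solutions n a d c"
    proof (rule image_subsetI)
      fix t assume t: "t \<in> ?T"
      then have "int (\<Sum>j<n. a j * nat (t j)) = int c"
        by (simp add: of_nat_sum)
      then have "(\<Sum>j<n. a j * nat (t j)) = c"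
        by (rule of_nat_eq_iff[THEN iffD1])
      with t show "(\<lambda>j\<in>{..<n}. nat (t j)) \<in> bounded_solutions n a d c"
        by (auto simp: bounded_solutions_def)
    qed
  qed
  from bij_betw_same_card[OF this] show ?thesis
    by (simp add: Pprime_def d_def)
qed

lemma card_weighted_solutions_Ccoef:
  fixes a d :: "nat \<Rightarrow> nat"
  assumes "0 < n" "0 < M" "\<forall>j<n. 0 < a j" "\<forall>j<n. a j * d j = M"
  shows "real (card {x \<in> {..<n} \<rightarrow>\<^sub>E UNIV. (\<Sum>j<n. a j * x j) = b})
       = (\<Sum>i=1..n. real (card (bounded_solutions n a d (b mod M + (i - 1) * M)))
             * Ccoef (real (b div M) + 2 - real i) (n - 1))"
proof -
  let ?T = "\<lambda>i. real (card (bounded_solutions n a d (b mod M + (i - 1) * M)))"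
  have "real (card (compositions n (b div M + 1 - i))) = Ccoef (real (b div M) + 2 - real i) (n - 1)"
    if "i \<le> b div M + 1" for i
  proof -
    have "real (card (compositions n (b div M + 1 - i))) = Ccoef (real (b div M + 1 - i) + 1) (n - 1)"
      by (rule card_compositions_eq_Ccoef[OF assms(1)])
    also have "real (b div M + 1 - i) + 1 = real (b div M) + 2 - real i"
      using that by (simp add: of_nat_diff)
    finally show ?thesis .
  qed
  then have "real (card {x \<in> {..<n} \<rightarrow>\<^sub>E UNIV. (\<Sum>j<n. a j * x j) = b})
      = (\<Sum>i=1..min n (b div M + 1). ?T i * Ccoef (real (b div M) + 2 - real i) (n - 1))"
    unfolding card_weighted_solutions[OF assms] of_nat_sum of_nat_mult
    by (intro sum.cong) auto
  also have "\<dots> = (\<Sum>i=1..n. ?T i * Ccoef (real (b div M) + 2 - real i) (n - 1))"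
    by (rule sum.mono_neutral_left) (auto simp: Ccoef_nonpos)
  finally show ?thesis .
qed

theorem mainTheorem3:
  fixes n :: nat and a :: "nat \<Rightarrow> nat" and b :: nat
  assumes "n \<ge> 2"
    and "\<forall>i<n. a i > 0"
  defines "M \<equiv> Lcm (a ` {..<n})"
  defines "b' \<equiv> b div M"
  defines "r \<equiv> b mod M"
  defines "l \<equiv> (\<lambda>i::nat. Pprime n a (int r + (int i - 1) * int M))"
  shows "real (Pcount n a b) =
           (\<Sum>i=1..n. real (l i) * Ccoef (real b' + 2 - real i) (n - 1))"
proof -
  have "0 < M"
    unfolding M_def using assms(2) by (subst neq0_conv[symmetric], subst Lcm_0_iff) force+
  moreover have "\<forall>j<n. a j * (M div a j) = M"
    unfolding M_def by (simp add: dvd_Lcm)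
  ultimately have "real (Pcount n a b) = (\<Sum>i=1..n. real (card (bounded_solutions n a (\<lambda>j. M div a j)
      (r + (i - 1) * M))) * Ccoef (real b' + 2 - real i) (n - 1))"
    using card_weighted_solutions_Ccoef[of n M a "\<lambda>j. M div a j" b] assms(1,2)
    by (simp add: Pcount_def b'_def r_def)
  also have "\<dots> = (\<Sum>i=1..n. real (l i) * Ccoef (real b' + 2 - real i) (n - 1))"
  proof (rule sum.cong)
    fix i :: nat assume "i \<in> {1..n}"
    then have "int r + (int i - 1) * int M = int (r + (i - 1) * M)"
      by (simp add: of_nat_diff)
    then have "l i = card (bounded_solutions n a (\<lambda>j. M div a j) (r + (i - 1) * M))"
      unfolding l_def M_def by (simp only: Pprime_eq_card_bounded_solutions)
    then show "real (card (bounded_solutions n a (\<lambda>j. M div a j) (r + (i - 1) * M)))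
        * Ccoef (real b' + 2 - real i) (n - 1) = real (l i) * Ccoef (real b' + 2 - real i) (n - 1)"
      by simp
  qed simp
  finally show ?thesis .
qed

end
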